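(* Let $(\Omega,S)$ be a scheme such that for every $\alpha\in\Omega$ the $\alpha$-extension $(\Omega,S_\alpha)$ is semiregular on $\Omega\setminus\{\alpha\}$ and its fibers are exactly the sets $\alpha s$, $s\in S$. Then $(\Omega,S)$ is a regular scheme or a Frobenius scheme.
   Context: A coherent configuration is a pair $(\Omega,S)$ with $\Omega$ finite and $S$ a partition of $\Omega\times\Omega$ such that the diagonal $1_\Omega$ is a union of elements of $S$, $S$ is closed under transposition, and for $r,s,t\in S$ the number $c_{rs}^t=|\{\beta:(\alpha,\beta)\in r,(\beta,\gamma)\in s\}|$ does not depend on $(\alpha,\gamma)\in t$. A scheme is one with $1_\Omega\in S$; $\alpha s=\{\beta:(\alpha,\beta)\in s\}$. A coherent configuration is semiregular if $|\alpha s|\le 1$ for all $\alpha,s$; a semiregular scheme is called regular. Fibers of $(\Omega,T)$ are sets $\Delta$ with $1_\Delta\in T$. The $\alpha$-extension $(\Omega,S_\alpha)$ is the coarsest coherent configuration on $\Omega$ such that $\{(\alpha,\alpha)\}$ and every $s\in S$ are unions of its basis relations; it is semiregular on $\Omega\setminus\{\alpha\}$ if $|\beta s|\le1$ for all $\beta\ne\alpha$ and $s\in S_\alpha$ with $s\subseteq(\Omega\setminus\{\alpha\})^2$. A Frobenius group is a non-regular transitive permutation group in which only the identity fixes two distinct points; a Frobenius scheme is the scheme (set of orbits on $\Omega\times\Omega$) of a Frobenius group. *)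

theory Defs
  imports Main
begin

definition nbhd :: "'a \<Rightarrow> ('a \<times> 'a) set \<Rightarrow> 'a set" where
  "nbhd a s = {b. (a, b) \<in> s}"

definition is_partition :: "'a set \<Rightarrow> ('a \<times> 'a) set set \<Rightarrow> bool" where
  "is_partition \<Omega> S \<longleftrightarrow>
     (\<forall>s\<in>S. s \<noteq> {}) \<and> \<Union>S = \<Omega> \<times> \<Omega> \<and>
     (\<forall>s\<in>S. \<forall>t\<in>S. s \<noteq> t \<longrightarrow> s \<inter> t = {})"

definition union_of :: "('a \<times> 'a) set set \<Rightarrow> ('a \<times> 'a) set \<Rightarrow> bool" where
  "union_of T x \<longleftrightarrow> x = \<Union>{t\<in>T. t \<subseteq> x}"

definition coherent_config :: "'a set \<Rightarrow> ('a \<times> 'a) set set \<Rightarrow> bool" where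
  "coherent_config \<Omega> S \<longleftrightarrow>
     finite \<Omega> \<and> is_partition \<Omega> S \<and>
     union_of S (Id_on \<Omega>) \<and>
     (\<forall>s\<in>S. s\<inverse> \<in> S) \<and>
     (\<forall>r\<in>S. \<forall>s\<in>S. \<forall>t\<in>S. \<forall>a c a' c'. (a, c) \<in> t \<longrightarrow> (a', c') \<in> t \<longrightarrow>
        card {b. (a, b) \<in> r \<and> (b, c) \<in> s} = card {b. (a', b) \<in> r \<and> (b, c') \<in> s})"

definition scheme :: "'a set \<Rightarrow> ('a \<times> 'a) set set \<Rightarrow> bool" where
  "scheme \<Omega> S \<longleftrightarrow> coherent_config \<Omega> S \<and> Id_on \<Omega> \<in> S"

definition semiregular :: "'a set \<Rightarrow> ('a \<times> 'a) set set \<Rightarrow> bool" where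
  "semiregular \<Omega> S \<longleftrightarrow> coherent_config \<Omega> S \<and>
     (\<forall>a\<in>\<Omega>. \<forall>s\<in>S. card (nbhd a s) \<le> 1)"

definition regular_scheme :: "'a set \<Rightarrow> ('a \<times> 'a) set set \<Rightarrow> bool" where
  "regular_scheme \<Omega> S \<longleftrightarrow> scheme \<Omega> S \<and> semiregular \<Omega> S"

definition fibers :: "('a \<times> 'a) set set \<Rightarrow> 'a set set" where
  "fibers T = {\<Delta>. Id_on \<Delta> \<in> T}"

text \<open>T is the alpha-extension of (Omega,S): the coarsest coherent configuration on Omega
  in which {(alpha,alpha)} and every s in S are unions of basis relations.\<close>
definition extension_admissible ::
  "'a set \<Rightarrow> ('a \<times> 'a) set set \<Rightarrow> 'a \<Rightarrow> ('a \<times> 'a) set set \<Rightarrow> bool" where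
  "extension_admissible \<Omega> S a T \<longleftrightarrow>
     coherent_config \<Omega> T \<and> union_of T {(a, a)} \<and> (\<forall>s\<in>S. union_of T s)"

definition is_alpha_extension ::
  "'a set \<Rightarrow> ('a \<times> 'a) set set \<Rightarrow> 'a \<Rightarrow> ('a \<times> 'a) set set \<Rightarrow> bool" where
  "is_alpha_extension \<Omega> S a T \<longleftrightarrow>
     extension_admissible \<Omega> S a T \<and>
     (\<forall>T'. extension_admissible \<Omega> S a T' \<longrightarrow> (\<forall>t\<in>T. union_of T' t))"

definition semiregular_on :: "('a \<times> 'a) set set \<Rightarrow> 'a set \<Rightarrow> bool" where
  "semiregular_on T \<Gamma> \<longleftrightarrow>
     (\<forall>b\<in>\<Gamma>. \<forall>s\<in>T. s \<subseteq> \<Gamma> \<times> \<Gamma> \<longrightarrow> card (nbhd b s) \<le> 1)"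

definition perm_group :: "'a set \<Rightarrow> ('a \<Rightarrow> 'a) set \<Rightarrow> bool" where
  "perm_group \<Omega> G \<longleftrightarrow>
     (\<forall>g\<in>G. bij_betw g \<Omega> \<Omega> \<and> (\<forall>x. x \<notin> \<Omega> \<longrightarrow> g x = x)) \<and>
     id \<in> G \<and> (\<forall>g\<in>G. \<forall>h\<in>G. g \<circ> h \<in> G) \<and> (\<forall>g\<in>G. inv g \<in> G)"

definition transitive_on :: "'a set \<Rightarrow> ('a \<Rightarrow> 'a) set \<Rightarrow> bool" where
  "transitive_on \<Omega> G \<longleftrightarrow> (\<forall>a\<in>\<Omega>. \<forall>b\<in>\<Omega>. \<exists>g\<in>G. g a = b)"

definition frobenius_group :: "'a set \<Rightarrow> ('a \<Rightarrow> 'a) set \<Rightarrow> bool" where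
  "frobenius_group \<Omega> G \<longleftrightarrow>
     perm_group \<Omega> G \<and> transitive_on \<Omega> G \<and>
     (\<exists>g\<in>G. g \<noteq> id \<and> (\<exists>a\<in>\<Omega>. g a = a)) \<and>
     (\<forall>g\<in>G. \<forall>a\<in>\<Omega>. \<forall>b\<in>\<Omega>. a \<noteq> b \<and> g a = a \<and> g b = b \<longrightarrow> g = id)"

definition orbitals :: "'a set \<Rightarrow> ('a \<Rightarrow> 'a) set \<Rightarrow> ('a \<times> 'a) set set" where
  "orbitals \<Omega> G = {{(g a, g b) | g. g \<in> G} | a b. a \<in> \<Omega> \<and> b \<in> \<Omega>}"

definition frobenius_scheme :: "'a set \<Rightarrow> ('a \<times> 'a) set set \<Rightarrow> bool" where
  "frobenius_scheme \<Omega> S \<longleftrightarrow> (\<exists>G. frobenius_group \<Omega> G \<and> S = orbitals \<Omega> G)"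

end

theory Submission
  imports Defs "HOL-Library.FuncSet"
begin

text \<open>
  Let \<open>G = Aut(\<Omega>, S)\<close> and fix \<open>\<alpha> \<in> \<Omega>\<close> with \<open>\<alpha>\<close>-extension \<open>T\<close>.  Because the fibres of
  \<open>T\<close> are the neighbourhoods \<open>\<alpha> s\<close> and \<open>T\<close> is semiregular off \<open>\<alpha>\<close>, every basis relation of \<open>T\<close>
  off \<open>\<alpha>\<close> is the graph of a bijection between two fibres.  For \<open>\<beta>, \<beta>'\<close> in one fibre this yields
  an automorphism fixing \<open>\<alpha>\<close> and sending \<open>\<beta>\<close> to \<open>\<beta>'\<close>, so \<open>G\<^sub>\<alpha>\<close> is transitive on each \<open>\<alpha> s\<close>.
  Conversely the orbital configuration of \<open>G\<^sub>\<alpha>\<close> is admissible, so by minimality \<open>G\<^sub>\<alpha>\<close> preserves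
  every relation of \<open>T\<close>, and hence an element of \<open>G\<^sub>\<alpha>\<close> fixing a second point is trivial.
  If the scheme is not regular, some valency \<open>k\<close> is at least 2, every point stabilizer then
  has order \<open>k\<close>, and a counting argument shows that \<open>G\<close> is transitive; thus \<open>G\<close> is a Frobenius
  group whose orbitals are exactly the basis relations.
\<close>

locale cc =
  fixes \<Omega> :: "'a set" and T :: "('a \<times> 'a) set set"
  assumes coherent: "coherent_config \<Omega> T"
begin

lemma finite_points: "finite \<Omega>"
  using coherent unfolding coherent_config_def by blast

lemma partition: "is_partition \<Omega> T"
  using coherent unfolding coherent_config_def by blast

lemma basis_sub: "t \<in> T \<Longrightarrow> t \<subseteq> \<Omega> \<times> \<Omega>"
  using partition unfolding is_partition_def by blast

lemma basis_nonempty: "t \<in> T \<Longrightarrow> t \<noteq> {}"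
  using partition unfolding is_partition_def by blast

lemma finite_basis: "finite T"
proof (rule finite_subset)
  show "T \<subseteq> Pow (\<Omega> \<times> \<Omega>)" using basis_sub by blast
  show "finite (Pow (\<Omega> \<times> \<Omega>))" using finite_points by simp
qed

lemma basis_disjoint: "t \<in> T \<Longrightarrow> t' \<in> T \<Longrightarrow> p \<in> t \<Longrightarrow> p \<in> t' \<Longrightarrow> t = t'"
  using partition unfolding is_partition_def by blast

lemma converse_basis: "t \<in> T \<Longrightarrow> t\<inverse> \<in> T"
  using coherent unfolding coherent_config_def by blast

lemma intersection_number:
  "r \<in> T \<Longrightarrow> s \<in> T \<Longrightarrow> t \<in> T \<Longrightarrow> (a, c) \<in> t \<Longrightarrow> (a', c') \<in> t \<Longrightarrow>
   card {b. (a, b) \<in> r \<and> (b, c) \<in> s} = card {b. (a', b) \<in> r \<and> (b, c') \<in> s}"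
  using coherent unfolding coherent_config_def by blast

definition cls :: "'a \<times> 'a \<Rightarrow> ('a \<times> 'a) set" where
  "cls p = (THE t. t \<in> T \<and> p \<in> t)"

lemma cls_eq: "t \<in> T \<Longrightarrow> p \<in> t \<Longrightarrow> cls p = t"
  unfolding cls_def by (rule the_equality) (auto dest: basis_disjoint)

lemma cls: "p \<in> \<Omega> \<times> \<Omega> \<Longrightarrow> cls p \<in> T \<and> p \<in> cls p"
proof -
  assume "p \<in> \<Omega> \<times> \<Omega>"
  then obtain t where "t \<in> T" "p \<in> t" using partition unfolding is_partition_def by blast
  then show ?thesis using cls_eq by simp
qed

lemma union_of_contains:
  assumes "union_of T x" "t \<in> T" "p \<in> t" "p \<in> x"
  shows "t \<subseteq> x"
  using assms basis_disjoint unfolding union_of_def by blast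

lemma diagonal_union: "union_of T (Id_on \<Omega>)"
  using coherent unfolding coherent_config_def by blast

lemma diagonal_cls: "a \<in> \<Omega> \<Longrightarrow> cls (a, a) \<subseteq> Id_on \<Omega>"
  using union_of_contains[OF diagonal_union] cls by blast

lemma finite_row: "r \<in> T \<Longrightarrow> finite {b. (a, b) \<in> r \<and> P b}"
  by (rule finite_subset[OF _ finite_points]) (use basis_sub in blast)

lemma finite_nbhd: "r \<in> T \<Longrightarrow> finite (nbhd a r)"
  using finite_row[of r a "\<lambda>_. True"] unfolding nbhd_def by simp

lemma start_fiber:
  assumes t: "t \<in> T" and xy: "(x, y) \<in> t" and xy': "(x', y') \<in> t"
  shows "(x', x') \<in> cls (x, x)"
proof -
  let ?d = "cls (x, x)"
  have d: "?d \<in> T" "(x, x) \<in> ?d" "?d \<subseteq> Id_on \<Omega>"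
    using cls diagonal_cls basis_sub[OF t] xy by blast+
  have "{b. (x, b) \<in> ?d \<and> (b, y) \<in> t} = {x}" using d xy by (auto simp: Id_on_def)
  then have "card {b. (x', b) \<in> ?d \<and> (b, y') \<in> t} = 1"
    using intersection_number[OF d(1) t t xy xy'] by simp
  then obtain b where "(x', b) \<in> ?d" by (auto simp: card_Suc_eq)
  with d(3) show ?thesis by (auto simp: Id_on_def)
qed

lemma end_fiber:
  assumes t: "t \<in> T" and xy: "(x, y) \<in> t" and xy': "(x', y') \<in> t"
  shows "(y', y') \<in> cls (y, y)"
  using start_fiber[OF converse_basis[OF t]] xy xy' by simp

lemma valency_on_fiber:
  assumes t: "t \<in> T" and xy: "(x, y) \<in> t" and x': "(x', x') \<in> cls (x, x)"
  shows "card (nbhd x' t) = card (nbhd x t)"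
proof -
  have d: "cls (x, x) \<in> T" "(x, x) \<in> cls (x, x)" using cls basis_sub[OF t] xy by blast+
  show ?thesis
    using intersection_number[OF t converse_basis[OF t] d(1) d(2) x'] unfolding nbhd_def by simp
qed

lemma intersection_number_unions:
  assumes x: "union_of T x" and y: "union_of T y" and t: "t \<in> T"
    and p: "(a, c) \<in> t" and q: "(a', c') \<in> t"
  shows "card {b. (a, b) \<in> x \<and> (b, c) \<in> y} = card {b. (a', b) \<in> x \<and> (b, c') \<in> y}"
proof -
  let ?I = "{r\<in>T. r \<subseteq> x} \<times> {s\<in>T. s \<subseteq> y}"
  define F :: "'a \<Rightarrow> 'a \<Rightarrow> ('a \<times> 'a) set \<times> ('a \<times> 'a) set \<Rightarrow> 'a set"
    where "F a c rs = {b. (a, b) \<in> fst rs \<and> (b, c) \<in> snd rs}" for a c rs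
  have split: "{b. (a, b) \<in> x \<and> (b, c) \<in> y} = (\<Union>i\<in>?I. F a c i)" for a c
  proof
    show "{b. (a, b) \<in> x \<and> (b, c) \<in> y} \<subseteq> (\<Union>i\<in>?I. F a c i)"
    proof
      fix b assume "b \<in> {b. (a, b) \<in> x \<and> (b, c) \<in> y}"
      then obtain r s where "r \<in> T" "r \<subseteq> x" "(a, b) \<in> r" "s \<in> T" "s \<subseteq> y" "(b, c) \<in> s"
        using x y unfolding union_of_def by blast
      then show "b \<in> (\<Union>i\<in>?I. F a c i)" unfolding F_def by force
    qed
  qed (auto simp: F_def)
  have count: "card (\<Union>i\<in>?I. F a c i) = (\<Sum>i\<in>?I. card (F a c i))" for a c
  proof (rule card_UN_disjoint)
    show "finite ?I" using finite_basis by simp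
    show "\<forall>i\<in>?I. finite (F a c i)" unfolding F_def using finite_row by auto
    show "\<forall>i\<in>?I. \<forall>j\<in>?I. i \<noteq> j \<longrightarrow> F a c i \<inter> F a c j = {}"
    proof (intro ballI impI)
      fix i j assume ij: "i \<in> ?I" "j \<in> ?I" "i \<noteq> j"
      then obtain r s r' s' where rs: "i = (r, s)" "j = (r', s')" "r \<in> T" "s \<in> T" "r' \<in> T" "s' \<in> T"
        by auto
      show "F a c i \<inter> F a c j = {}"
      proof (rule ccontr)
        assume "F a c i \<inter> F a c j \<noteq> {}"
        then obtain b where "(a, b) \<in> r" "(a, b) \<in> r'" "(b, c) \<in> s" "(b, c) \<in> s'"
          unfolding F_def rs by auto
        then have "r = r'" "s = s'" using basis_disjoint rs by blast+
        then show False using ij rs by simp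
      qed
    qed
  qed
  have "(\<Sum>i\<in>?I. card (F a c i)) = (\<Sum>i\<in>?I. card (F a' c' i))"
  proof (rule sum.cong)
    fix i assume "i \<in> ?I"
    then show "card (F a c i) = card (F a' c' i)"
      unfolding F_def using intersection_number[OF _ _ t p q] by (cases i) simp
  qed simp
  then show ?thesis using split count by metis
qed

end

lemma trancl_invariant:
  assumes "\<And>p q. (p, q) \<in> R \<Longrightarrow> f p = f q" and "(p, q) \<in> R\<^sup>+"
  shows "f p = f q"
  using assms(2) by induction (use assms(1) in fastforce)+

lemma trancl_map:
  assumes "\<And>p q. (p, q) \<in> R \<Longrightarrow> (h p, h q) \<in> R" and "(p, q) \<in> R\<^sup>+"
  shows "(h p, h q) \<in> R\<^sup>+"
  using assms(2) by induction (use assms(1) in \<open>blast intro: trancl_into_trancl\<close>)+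

definition join_rel :: "('a \<times> 'a) set set set \<Rightarrow> (('a \<times> 'a) \<times> ('a \<times> 'a)) set" where
  "join_rel \<T> = {(p, q). \<exists>T\<in>\<T>. \<exists>t\<in>T. p \<in> t \<and> q \<in> t}"

definition join :: "'a set \<Rightarrow> ('a \<times> 'a) set set set \<Rightarrow> ('a \<times> 'a) set set" where
  "join \<Omega> \<T> = (\<Omega> \<times> \<Omega>) // (join_rel \<T>)\<^sup>+"

lemma join_relI: "T \<in> \<T> \<Longrightarrow> t \<in> T \<Longrightarrow> p \<in> t \<Longrightarrow> q \<in> t \<Longrightarrow> (p, q) \<in> join_rel \<T>"
  unfolding join_rel_def by blast

lemma join_relE:
  assumes "(p, q) \<in> join_rel \<T>"
  obtains T t where "T \<in> \<T>" "t \<in> T" "p \<in> t" "q \<in> t"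
  using assms unfolding join_rel_def by blast

lemma join_class_closed:
  assumes "x \<in> join \<Omega> \<T>" "(p, q) \<in> join_rel \<T>" "p \<in> x"
  shows "q \<in> x"
  using assms unfolding join_def by (auto elim!: quotientE intro: trancl_into_trancl)

locale cc_family =
  fixes \<Omega> :: "'a set" and \<T> :: "('a \<times> 'a) set set set"
  assumes members: "\<And>T. T \<in> \<T> \<Longrightarrow> coherent_config \<Omega> T"
    and nonempty: "\<T> \<noteq> {}"
begin

lemma member_cc: "T \<in> \<T> \<Longrightarrow> cc \<Omega> T"
  by (rule cc.intro[OF members])

lemma join_rel_sub: "join_rel \<T> \<subseteq> (\<Omega> \<times> \<Omega>) \<times> (\<Omega> \<times> \<Omega>)"
  unfolding join_rel_def using cc.basis_sub[OF member_cc] by blast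

lemma join_equiv: "equiv (\<Omega> \<times> \<Omega>) ((join_rel \<T>)\<^sup>+)"
proof (rule equivI)
  show "(join_rel \<T>)\<^sup>+ \<subseteq> (\<Omega> \<times> \<Omega>) \<times> (\<Omega> \<times> \<Omega>)"
    using join_rel_sub by (rule trancl_subset_Sigma)
  obtain T where T: "T \<in> \<T>" using nonempty by blast
  interpret T: cc \<Omega> T by (rule member_cc[OF T])
  have "(p, p) \<in> join_rel \<T>" if "p \<in> \<Omega> \<times> \<Omega>" for p
    using T T.cls[OF that] unfolding join_rel_def by blast
  then show "refl_on (\<Omega> \<times> \<Omega>) ((join_rel \<T>)\<^sup>+)"
    by (auto simp: refl_on_def)
  have "sym (join_rel \<T>)" unfolding join_rel_def sym_def by blast
  then show "sym ((join_rel \<T>)\<^sup>+)" by (rule sym_trancl)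
qed (rule trans_trancl)

lemma join_refines:
  assumes T: "T \<in> \<T>" and x: "x \<in> join \<Omega> \<T>"
  shows "union_of T x"
proof -
  interpret T: cc \<Omega> T by (rule member_cc[OF T])
  have "x \<subseteq> \<Omega> \<times> \<Omega>"
    using in_quotient_imp_subset[OF join_equiv] x unfolding join_def .
  moreover have "T.cls u \<subseteq> x" if "u \<in> x" "u \<in> \<Omega> \<times> \<Omega>" for u
    using join_class_closed[OF x _ \<open>u \<in> x\<close>] T T.cls[OF \<open>u \<in> \<Omega> \<times> \<Omega>\<close>]
    unfolding join_rel_def by blast
  ultimately show ?thesis
    unfolding union_of_def using T.cls by blast
qed

lemma union_of_join:
  assumes sub: "x \<subseteq> \<Omega> \<times> \<Omega>" and unions: "\<And>T. T \<in> \<T> \<Longrightarrow> union_of T x"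
  shows "union_of (join \<Omega> \<T>) x"
proof -
  let ?E = "(join_rel \<T>)\<^sup>+"
  have step: "p \<in> x \<longleftrightarrow> q \<in> x" if pq: "(p, q) \<in> join_rel \<T>" for p q
  proof -
    obtain T t where "T \<in> \<T>" "t \<in> T" "p \<in> t" "q \<in> t"
      using pq unfolding join_rel_def by blast
    then show ?thesis
      using cc.union_of_contains[OF member_cc unions] by blast
  qed
  have "?E `` {p} \<subseteq> x" if "p \<in> x" for p
    using trancl_invariant[where f = "\<lambda>p. p \<in> x", OF step] that by blast
  moreover have "?E `` {p} \<in> join \<Omega> \<T>" "p \<in> ?E `` {p}" if "p \<in> x" for p
    using that sub join_equiv unfolding join_def equiv_def refl_on_def by (auto intro: quotientI)
  ultimately show ?thesis unfolding union_of_def by blast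
qed

lemma join_converse:
  assumes x: "x \<in> join \<Omega> \<T>"
  shows "x\<inverse> \<in> join \<Omega> \<T>"
proof -
  let ?E = "(join_rel \<T>)\<^sup>+"
  have swap: "(prod.swap p, prod.swap q) \<in> join_rel \<T>" if "(p, q) \<in> join_rel \<T>" for p q
  proof -
    obtain T t where T: "T \<in> \<T>" "t \<in> T" "p \<in> t" "q \<in> t"
      using \<open>(p, q) \<in> join_rel \<T>\<close> by (rule join_relE)
    have "t\<inverse> \<in> T" using cc.converse_basis[OF member_cc[OF T(1)] T(2)] .
    moreover have "prod.swap p \<in> t\<inverse>" using T(3) by (cases p) simp
    moreover have "prod.swap q \<in> t\<inverse>" using T(4) by (cases q) simp
    ultimately show ?thesis by (rule join_relI[OF T(1)])
  qed
  have swap_trancl: "(prod.swap p, prod.swap q) \<in> ?E" if "(p, q) \<in> ?E" for p q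
    using trancl_map[where h = prod.swap, OF swap that] .
  obtain p where p: "p \<in> \<Omega> \<times> \<Omega>" "x = ?E `` {p}"
    using x unfolding join_def by (rule quotientE)
  have "x\<inverse> = ?E `` {prod.swap p}"
  proof (rule set_eqI)
    fix q :: "'a \<times> 'a"
    have "q \<in> x\<inverse> \<longleftrightarrow> (p, prod.swap q) \<in> ?E" using p(2) by (cases q) auto
    also have "\<dots> \<longleftrightarrow> (prod.swap p, q) \<in> ?E"
      using swap_trancl[of p "prod.swap q"] swap_trancl[of "prod.swap p" q] by auto
    finally show "q \<in> x\<inverse> \<longleftrightarrow> q \<in> ?E `` {prod.swap p}" by simp
  qed
  then show ?thesis using p(1) unfolding join_def by (auto intro: quotientI)
qed

text \<open>Intersection numbers of classes of the join agree on pairs identified by a member (by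
  \<open>intersection_number_unions\<close>), hence along the transitive closure.\<close>
lemma join_intersection_number:
  assumes rs: "r \<in> join \<Omega> \<T>" "s \<in> join \<Omega> \<T>"
    and t: "t \<in> join \<Omega> \<T>" "(a, c) \<in> t" "(a', c') \<in> t"
  shows "card {b. (a, b) \<in> r \<and> (b, c) \<in> s} = card {b. (a', b) \<in> r \<and> (b, c') \<in> s}"
proof -
  let ?f = "\<lambda>p. card {b. (fst p, b) \<in> r \<and> (b, snd p) \<in> s}"
  have "?f p = ?f q" if "(p, q) \<in> join_rel \<T>" for p q
  proof -
    obtain T u where T: "T \<in> \<T>" "u \<in> T" "p \<in> u" "q \<in> u"
      using \<open>(p, q) \<in> join_rel \<T>\<close> by (rule join_relE)
    show ?thesis
      using cc.intersection_number_unions[OF member_cc[OF T(1)] join_refines[OF T(1) rs(1)]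
        join_refines[OF T(1) rs(2)] T(2), of "fst p" "snd p" "fst q" "snd q"] T(3,4) by simp
  qed
  moreover have "((a, c), (a', c')) \<in> (join_rel \<T>)\<^sup>+"
    using quotient_eq_iff[OF join_equiv, of t t "(a, c)" "(a', c')"] t unfolding join_def by blast
  ultimately have "?f (a, c) = ?f (a', c')" by (rule trancl_invariant)
  then show ?thesis by simp
qed

lemma join_coherent: "coherent_config \<Omega> (join \<Omega> \<T>)"
proof -
  obtain T where "T \<in> \<T>" using nonempty by blast
  then have "finite \<Omega>" using cc.finite_points[OF member_cc] by blast
  moreover have "is_partition \<Omega> (join \<Omega> \<T>)"
    using join_equiv quotient_disj[OF join_equiv] unfolding is_partition_def join_def
    by (auto simp: Union_quotient in_quotient_imp_non_empty)
  moreover have "union_of (join \<Omega> \<T>) (Id_on \<Omega>)"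
    by (rule union_of_join) (auto intro: cc.diagonal_union[OF member_cc])
  ultimately show ?thesis
    unfolding coherent_config_def using join_converse join_intersection_number by blast
qed

end

lemma discrete_coherent:
  assumes "finite \<Omega>"
  shows "coherent_config \<Omega> {{p} | p. p \<in> \<Omega> \<times> \<Omega>}"
  using assms unfolding coherent_config_def is_partition_def union_of_def
  by (auto simp: Id_on_def)

text \<open>The \<open>\<alpha>\<close>-extension exists: it is the join of all admissible configurations, which is
  admissible itself and, by construction, coarser than each of them.\<close>
lemma alpha_extension_exists:
  assumes S: "coherent_config \<Omega> S" and a: "a \<in> \<Omega>"
  shows "\<exists>T. is_alpha_extension \<Omega> S a T"
proof -
  define \<T> where "\<T> = {T. extension_admissible \<Omega> S a T}"
  let ?D = "{{p} | p. p \<in> \<Omega> \<times> \<Omega>}"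
  have S_sub: "s \<subseteq> \<Omega> \<times> \<Omega>" if "s \<in> S" for s
    using cc.basis_sub[OF cc.intro[OF S] that] .
  have "extension_admissible \<Omega> S a ?D"
    unfolding extension_admissible_def
  proof (intro conjI ballI)
    show "coherent_config \<Omega> ?D" by (rule discrete_coherent[OF cc.finite_points[OF cc.intro[OF S]]])
    show "union_of ?D {(a, a)}" using a unfolding union_of_def by auto
    show "union_of ?D s" if "s \<in> S" for s using S_sub[OF that] unfolding union_of_def by auto
  qed
  then interpret family: cc_family \<Omega> \<T>
    by unfold_locales (auto simp: \<T>_def extension_admissible_def)
  have "extension_admissible \<Omega> S a (join \<Omega> \<T>)"
    unfolding extension_admissible_def
  proof (intro conjI ballI)
    show "coherent_config \<Omega> (join \<Omega> \<T>)" by (rule family.join_coherent)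
    show "union_of (join \<Omega> \<T>) {(a, a)}"
      by (rule family.union_of_join) (use a in \<open>auto simp: \<T>_def extension_admissible_def\<close>)
    show "union_of (join \<Omega> \<T>) s" if "s \<in> S" for s
      by (rule family.union_of_join) (use S_sub that in \<open>auto simp: \<T>_def extension_admissible_def\<close>)
  qed
  then have "is_alpha_extension \<Omega> S a (join \<Omega> \<T>)"
    unfolding is_alpha_extension_def using family.join_refines \<T>_def by blast
  then show ?thesis by blast
qed

lemma bij_if_fixes_outside:
  assumes on: "bij_betw g \<Omega> \<Omega>" and off: "\<And>x. x \<notin> \<Omega> \<Longrightarrow> g x = x"
  shows "bij g"
proof -
  have "bij_betw g (- \<Omega>) (- \<Omega>)"
    using off by (simp add: bij_betw_def inj_on_def image_def)
  with on have "bij_betw g (\<Omega> \<union> - \<Omega>) (\<Omega> \<union> - \<Omega>)"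
    by (rule bij_betw_combine) blast
  then show ?thesis by simp
qed

lemma perm_group_bij: "perm_group \<Omega> G \<Longrightarrow> g \<in> G \<Longrightarrow> bij g"
  unfolding perm_group_def by (blast intro: bij_if_fixes_outside)

lemma finite_perm_group:
  assumes "finite \<Omega>" and G: "perm_group \<Omega> G"
  shows "finite G"
proof (rule finite_imageD)
  have "g x \<in> \<Omega>" if "g \<in> G" "x \<in> \<Omega>" for g x
    using G that unfolding perm_group_def bij_betw_def by blast
  then have "(\<lambda>g. restrict g \<Omega>) ` G \<subseteq> \<Omega> \<rightarrow>\<^sub>E \<Omega>"
    by (auto simp: PiE_iff)
  then show "finite ((\<lambda>g. restrict g \<Omega>) ` G)"
    by (rule finite_subset) (simp add: finite_PiE \<open>finite \<Omega>\<close>)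
  show "inj_on (\<lambda>g. restrict g \<Omega>) G"
  proof (rule inj_onI)
    fix g h assume "g \<in> G" "h \<in> G" "restrict g \<Omega> = restrict h \<Omega>"
    show "g = h"
    proof
      fix x
      have "g x = x \<and> h x = x" if "x \<notin> \<Omega>"
        using G \<open>g \<in> G\<close> \<open>h \<in> G\<close> that unfolding perm_group_def by blast
      then show "g x = h x"
        using fun_cong[OF \<open>restrict g \<Omega> = restrict h \<Omega>\<close>, of x] by (cases "x \<in> \<Omega>") auto
    qed
  qed
qed

locale permutation_group =
  fixes \<Omega> :: "'a set" and G :: "('a \<Rightarrow> 'a) set"
  assumes perm_group: "perm_group \<Omega> G"
begin

lemma id_mem: "id \<in> G"
  using perm_group unfolding perm_group_def by blast

lemma comp_mem: "g \<in> G \<Longrightarrow> h \<in> G \<Longrightarrow> g \<circ> h \<in> G"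
  using perm_group unfolding perm_group_def by blast

lemma inv_mem: "g \<in> G \<Longrightarrow> inv g \<in> G"
  using perm_group unfolding perm_group_def by blast

lemma closed: "g \<in> G \<Longrightarrow> x \<in> \<Omega> \<Longrightarrow> g x \<in> \<Omega>"
  using perm_group unfolding perm_group_def bij_betw_def by blast

lemma fixes_outside: "g \<in> G \<Longrightarrow> x \<notin> \<Omega> \<Longrightarrow> g x = x"
  using perm_group unfolding perm_group_def by blast

lemma inv_apply: "g \<in> G \<Longrightarrow> inv g (g x) = x"
  using perm_group_bij[OF perm_group] by (simp add: bij_is_inj)

lemma apply_inv: "g \<in> G \<Longrightarrow> g (inv g x) = x"
  using perm_group_bij[OF perm_group] by (simp add: bij_is_surj surj_f_inv_f)

lemma inj: "g \<in> G \<Longrightarrow> inj g"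
  using perm_group_bij[OF perm_group] by (simp add: bij_is_inj)

end

definition orbital :: "('a \<Rightarrow> 'a) set \<Rightarrow> 'a \<Rightarrow> 'a \<Rightarrow> ('a \<times> 'a) set" where
  "orbital G a b = {(g a, g b) | g. g \<in> G}"

lemma orbitals_eq: "orbitals \<Omega> G = {orbital G a b | a b. a \<in> \<Omega> \<and> b \<in> \<Omega>}"
  unfolding orbitals_def orbital_def ..

context permutation_group
begin

lemma orbital_sub: "a \<in> \<Omega> \<Longrightarrow> b \<in> \<Omega> \<Longrightarrow> orbital G a b \<subseteq> \<Omega> \<times> \<Omega>"
  unfolding orbital_def using closed by blast

lemma orbital_self: "(a, b) \<in> orbital G a b"
proof -
  have "(a, b) = (id a, id b)" by simp
  then show ?thesis unfolding orbital_def using id_mem by blast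
qed

lemma orbital_invariant:
  assumes h: "h \<in> G" and uv: "(u, v) \<in> orbital G a b"
  shows "(h u, h v) \<in> orbital G a b"
proof -
  obtain g where g: "g \<in> G" "u = g a" "v = g b" using uv unfolding orbital_def by blast
  then have "(h u, h v) = ((h \<circ> g) a, (h \<circ> g) b)" by simp
  then show ?thesis unfolding orbital_def using comp_mem[OF h g(1)] by blast
qed

lemma orbital_transporter:
  assumes "(u, v) \<in> orbital G a b" "(u', v') \<in> orbital G a b"
  obtains h where "h \<in> G" "h u = u'" "h v = v'"
proof -
  obtain g g' where g: "g \<in> G" "g' \<in> G" "u = g a" "v = g b" "u' = g' a" "v' = g' b"
    using assms unfolding orbital_def by blast
  have "g' \<circ> inv g \<in> G" using comp_mem[OF g(2) inv_mem[OF g(1)]] .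
  moreover have "(g' \<circ> inv g) u = u'" "(g' \<circ> inv g) v = v'"
    using g inv_apply[OF g(1)] by simp_all
  ultimately show ?thesis by (rule that)
qed

lemma orbital_eq:
  assumes uv: "(u, v) \<in> orbital G a b"
  shows "orbital G u v = orbital G a b"
proof
  show "orbital G u v \<subseteq> orbital G a b"
  proof (rule subrelI)
    fix x y assume "(x, y) \<in> orbital G u v"
    then obtain g where "g \<in> G" "x = g u" "y = g v" unfolding orbital_def by blast
    then show "(x, y) \<in> orbital G a b" using orbital_invariant[OF _ uv] by simp
  qed
  show "orbital G a b \<subseteq> orbital G u v"
  proof (rule subrelI)
    fix x y assume "(x, y) \<in> orbital G a b"
    then obtain h where "h \<in> G" "h u = x" "h v = y" using orbital_transporter[OF uv] by blast
    then show "(x, y) \<in> orbital G u v" using orbital_invariant[OF _ orbital_self] by metis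
  qed
qed

lemma union_of_orbitals:
  assumes sub: "x \<subseteq> \<Omega> \<times> \<Omega>" and inv: "\<And>h u v. h \<in> G \<Longrightarrow> (u, v) \<in> x \<Longrightarrow> (h u, h v) \<in> x"
  shows "union_of (orbitals \<Omega> G) x"
proof -
  have "orbital G u v \<in> orbitals \<Omega> G" "orbital G u v \<subseteq> x" if "(u, v) \<in> x" for u v
    using that sub inv unfolding orbitals_eq orbital_def by blast+
  then show ?thesis unfolding union_of_def using orbital_self by fast
qed

lemma invariant_if_union_of_orbitals:
  assumes "union_of (orbitals \<Omega> G) x" "h \<in> G" "(u, v) \<in> x"
  shows "(h u, h v) \<in> x"
proof -
  obtain a b where "a \<in> \<Omega>" "b \<in> \<Omega>" "orbital G a b \<subseteq> x" "(u, v) \<in> orbital G a b"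
    using assms(1,3) unfolding union_of_def orbitals_eq by blast
  then show ?thesis using orbital_invariant[OF assms(2)] by blast
qed

lemma paths_transported:
  assumes h: "h \<in> G" and fin: "finite {b. (h a, b) \<in> r \<and> (b, h c) \<in> s}"
    and r: "\<And>u v. (u, v) \<in> r \<Longrightarrow> (h u, h v) \<in> r"
    and s: "\<And>u v. (u, v) \<in> s \<Longrightarrow> (h u, h v) \<in> s"
  shows "card {b. (a, b) \<in> r \<and> (b, c) \<in> s} \<le> card {b. (h a, b) \<in> r \<and> (b, h c) \<in> s}"
proof -
  let ?A = "{b. (a, b) \<in> r \<and> (b, c) \<in> s}"
  have "card ?A = card (h ` ?A)"
    using inj[OF h] by (simp add: card_image inj_on_subset)
  also have "\<dots> \<le> card {b. (h a, b) \<in> r \<and> (b, h c) \<in> s}"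
    by (rule card_mono[OF fin]) (use r s in blast)
  finally show ?thesis .
qed

lemma orbitals_partition: "is_partition \<Omega> (orbitals \<Omega> G)"
  unfolding is_partition_def
proof (intro conjI ballI impI)
  show "s \<noteq> {}" if "s \<in> orbitals \<Omega> G" for s using that orbital_self unfolding orbitals_eq by blast
  show "\<Union>(orbitals \<Omega> G) = \<Omega> \<times> \<Omega>" using orbital_sub orbital_self unfolding orbitals_eq by blast
  show "s \<inter> t = {}" if st: "s \<in> orbitals \<Omega> G" "t \<in> orbitals \<Omega> G" "s \<noteq> t" for s t
  proof (rule ccontr)
    assume "s \<inter> t \<noteq> {}"
    then obtain u v where "(u, v) \<in> s" "(u, v) \<in> t" by auto
    moreover obtain a b c d where "s = orbital G a b" "t = orbital G c d"
      using st(1,2) unfolding orbitals_eq by blast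
    ultimately have "s = orbital G u v" "t = orbital G u v" using orbital_eq by metis+
    then show False using st(3) by simp
  qed
qed

text \<open>Pairs in one orbital are exchanged by group elements \<open>h\<close> and \<open>h\<inverse>\<close>, which transport two-step
  paths along invariant relations in both directions.\<close>
lemma orbitals_intersection_number:
  assumes fin: "finite \<Omega>" and rst: "r \<in> orbitals \<Omega> G" "s \<in> orbitals \<Omega> G" "t \<in> orbitals \<Omega> G"
    and ac: "(a, c) \<in> t" "(a', c') \<in> t"
  shows "card {b. (a, b) \<in> r \<and> (b, c) \<in> s} = card {b. (a', b) \<in> r \<and> (b, c') \<in> s}"
proof -
  have invariant: "(h u, h v) \<in> x" if "x \<in> orbitals \<Omega> G" "h \<in> G" "(u, v) \<in> x" for x h u v
    using that orbital_invariant unfolding orbitals_eq by blast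
  have finite_paths: "finite {b. (a, b) \<in> r \<and> P b}" for a P
  proof -
    obtain x y where "x \<in> \<Omega>" "y \<in> \<Omega>" "r = orbital G x y" using rst(1) unfolding orbitals_eq by blast
    then have "{b. (a, b) \<in> r \<and> P b} \<subseteq> \<Omega>" using orbital_sub by blast
    then show ?thesis using fin by (rule finite_subset)
  qed
  obtain x y where "t = orbital G x y" using rst(3) unfolding orbitals_eq by blast
  then obtain h where h: "h \<in> G" "h a = a'" "h c = c'"
    using orbital_transporter ac by metis
  let ?h' = "inv h"
  have h': "?h' \<in> G" "?h' a' = a" "?h' c' = c" using h inv_mem inv_apply by auto
  have "card {b. (a, b) \<in> r \<and> (b, c) \<in> s} \<le> card {b. (h a, b) \<in> r \<and> (b, h c) \<in> s}"
    by (rule paths_transported[OF h(1) finite_paths invariant[OF rst(1) h(1)] invariant[OF rst(2) h(1)]])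
  moreover have "card {b. (a', b) \<in> r \<and> (b, c') \<in> s} \<le> card {b. (?h' a', b) \<in> r \<and> (b, ?h' c') \<in> s}"
    by (rule paths_transported[OF h'(1) finite_paths invariant[OF rst(1) h'(1)] invariant[OF rst(2) h'(1)]])
  ultimately show ?thesis using h(2,3) h'(2,3) by simp
qed

lemma orbitals_coherent:
  assumes fin: "finite \<Omega>"
  shows "coherent_config \<Omega> (orbitals \<Omega> G)"
proof -
  have "union_of (orbitals \<Omega> G) (Id_on \<Omega>)"
    by (rule union_of_orbitals) (auto simp: Id_on_def closed)
  moreover have "t\<inverse> \<in> orbitals \<Omega> G" if t: "t \<in> orbitals \<Omega> G" for t
  proof -
    obtain a b where "a \<in> \<Omega>" "b \<in> \<Omega>" "t = orbital G a b" using t unfolding orbitals_eq by blast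
    moreover have "(orbital G a b)\<inverse> = orbital G b a" unfolding orbital_def by blast
    ultimately show ?thesis unfolding orbitals_eq by blast
  qed
  ultimately show ?thesis
    unfolding coherent_config_def
    using fin orbitals_partition orbitals_intersection_number[OF fin] by blast
qed

end

definition stabilizer :: "('a \<Rightarrow> 'a) set \<Rightarrow> 'a \<Rightarrow> ('a \<Rightarrow> 'a) set" where
  "stabilizer G a = {g \<in> G. g a = a}"

definition orbit :: "('a \<Rightarrow> 'a) set \<Rightarrow> 'a \<Rightarrow> 'a set" where
  "orbit G a = (\<lambda>g. g a) ` G"

context permutation_group
begin

lemma stabilizer_perm_group: "perm_group \<Omega> (stabilizer G a)"
proof -
  have "inv g a = a" if "g \<in> G" "g a = a" for g
    using inv_apply[OF that(1), of a] that(2) by simp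
  then show ?thesis
    using perm_group id_mem comp_mem inv_mem unfolding perm_group_def stabilizer_def by auto
qed

text \<open>Each fibre of the evaluation map \<open>g \<mapsto> g d\<close> is a coset of the stabilizer of \<open>d\<close>.\<close>
lemma card_coset:
  assumes g0: "g0 \<in> G"
  shows "card {g \<in> G. g d = g0 d} = card (stabilizer G d)"
proof -
  have "bij_betw (\<lambda>h. g0 \<circ> h) (stabilizer G d) {g \<in> G. g d = g0 d}"
  proof (rule bij_betwI[where g = "\<lambda>g. inv g0 \<circ> g"])
    show "(\<lambda>h. g0 \<circ> h) \<in> stabilizer G d \<rightarrow> {g \<in> G. g d = g0 d}"
      using comp_mem[OF g0] unfolding stabilizer_def by auto
    show "(\<lambda>g. inv g0 \<circ> g) \<in> {g \<in> G. g d = g0 d} \<rightarrow> stabilizer G d"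
      using comp_mem[OF inv_mem[OF g0]] inv_apply[OF g0] unfolding stabilizer_def by auto
    show "inv g0 \<circ> (g0 \<circ> h) = h" for h
      using inv_apply[OF g0] by (simp add: fun_eq_iff)
    show "g0 \<circ> (inv g0 \<circ> g) = g" for g
      using apply_inv[OF g0] by (simp add: fun_eq_iff)
  qed
  then show ?thesis by (simp add: bij_betw_same_card)
qed

lemma orbit_stabilizer:
  assumes "finite \<Omega>"
  shows "card G = card (orbit G d) * card (stabilizer G d)"
proof -
  have finG: "finite G" by (rule finite_perm_group[OF assms perm_group])
  have "G = (\<Union>y\<in>orbit G d. {g \<in> G. g d = y})" unfolding orbit_def by blast
  also have "card \<dots> = (\<Sum>y\<in>orbit G d. card {g \<in> G. g d = y})"
    by (rule card_UN_disjoint) (use finG in \<open>auto simp: orbit_def\<close>)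
  also have "\<dots> = (\<Sum>y\<in>orbit G d. card (stabilizer G d))"
    unfolding orbit_def using card_coset by (intro sum.cong) auto
  finally show ?thesis by simp
qed

text \<open>If all point stabilizers have order \<open>k\<close> and only the identity fixes two points, the
  nontrivial elements of the \<open>n\<close> stabilizers are pairwise distinct: \<open>n (k - 1) + 1 \<le> |G|\<close>.\<close>
lemma fixers_bound:
  assumes fin: "finite \<Omega>"
    and stab: "\<And>d. d \<in> \<Omega> \<Longrightarrow> card (stabilizer G d) = k"
    and two_point: "\<And>g a b. g \<in> G \<Longrightarrow> a \<in> \<Omega> \<Longrightarrow> b \<in> \<Omega> \<Longrightarrow> a \<noteq> b \<Longrightarrow> g a = a \<Longrightarrow> g b = b \<Longrightarrow> g = id"
  shows "card \<Omega> * (k - 1) + 1 \<le> card G"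
proof -
  have finG: "finite G" by (rule finite_perm_group[OF fin perm_group])
  let ?F = "\<Union>d\<in>\<Omega>. stabilizer G d - {id}"
  have "card ?F = (\<Sum>d\<in>\<Omega>. card (stabilizer G d - {id}))"
  proof (rule card_UN_disjoint[OF fin])
    show "\<forall>d\<in>\<Omega>. finite (stabilizer G d - {id})" using finG unfolding stabilizer_def by simp
    show "\<forall>i\<in>\<Omega>. \<forall>j\<in>\<Omega>. i \<noteq> j \<longrightarrow> (stabilizer G i - {id}) \<inter> (stabilizer G j - {id}) = {}"
    proof (intro ballI impI)
      fix i j assume "i \<in> \<Omega>" "j \<in> \<Omega>" "i \<noteq> j"
      then show "(stabilizer G i - {id}) \<inter> (stabilizer G j - {id}) = {}"
        using two_point unfolding stabilizer_def by blast
    qed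
  qed
  also have "\<dots> = (\<Sum>d\<in>\<Omega>. k - 1)"
    using stab id_mem unfolding stabilizer_def by (intro sum.cong) (simp_all add: card_Diff_singleton)
  finally have "card \<Omega> * (k - 1) = card ?F" by simp
  also have "\<dots> \<le> card (G - {id})"
    using finG unfolding stabilizer_def by (intro card_mono) auto
  also have "\<dots> = card G - 1" using id_mem finG by (simp add: card_Diff_singleton)
  finally have "card \<Omega> * (k - 1) \<le> card G - 1" .
  moreover have "0 < card G" using finG id_mem by (auto simp: card_gt_0_iff)
  ultimately show ?thesis by linarith
qed

lemma orbits_disjoint:
  assumes "\<not> (\<exists>g\<in>G. g a = d)"
  shows "orbit G a \<inter> orbit G d = {}"
proof (rule ccontr)
  assume "orbit G a \<inter> orbit G d \<noteq> {}"
  then obtain g h where gh: "g \<in> G" "h \<in> G" "g a = h d" unfolding orbit_def by blast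
  then have "(inv h \<circ> g) a = d" using inv_apply[OF gh(2)] by simp
  then show False using assms comp_mem[OF inv_mem[OF gh(2)] gh(1)] by blast
qed

text \<open>Otherwise two disjoint orbits, each of size \<open>|G| / k\<close>, would give
  \<open>2 |G| \<le> n k\<close>, contradicting \<open>n (k - 1) + 1 \<le> |G|\<close>.\<close>
lemma transitive_by_counting:
  assumes fin: "finite \<Omega>" and k: "2 \<le> k"
    and stab: "\<And>d. d \<in> \<Omega> \<Longrightarrow> card (stabilizer G d) = k"
    and two_point: "\<And>g a b. g \<in> G \<Longrightarrow> a \<in> \<Omega> \<Longrightarrow> b \<in> \<Omega> \<Longrightarrow> a \<noteq> b \<Longrightarrow> g a = a \<Longrightarrow> g b = b \<Longrightarrow> g = id"
  shows "transitive_on \<Omega> G"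
  unfolding transitive_on_def
proof (intro ballI)
  fix a d assume a: "a \<in> \<Omega>" and d: "d \<in> \<Omega>"
  show "\<exists>g\<in>G. g a = d"
  proof (rule ccontr)
    assume "\<not> (\<exists>g\<in>G. g a = d)"
    then have disjoint: "orbit G a \<inter> orbit G d = {}" by (rule orbits_disjoint)
    have sub: "orbit G a \<subseteq> \<Omega>" "orbit G d \<subseteq> \<Omega>"
      using closed a d unfolding orbit_def by blast+
    have "card (orbit G a) + card (orbit G d) = card (orbit G a \<union> orbit G d)"
      using disjoint sub fin by (simp add: card_Un_disjoint finite_subset)
    also have "\<dots> \<le> card \<Omega>" using sub fin by (intro card_mono) auto
    finally have "(card (orbit G a) + card (orbit G d)) * k \<le> card \<Omega> * k" by simp
    moreover have "2 * card G = (card (orbit G a) + card (orbit G d)) * k"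
      using orbit_stabilizer[OF fin, of a] orbit_stabilizer[OF fin, of d] stab[OF a] stab[OF d]
      by (simp add: algebra_simps)
    moreover obtain m where "k = m + 2" using k le_Suc_ex[of 2 k] by (auto simp: add.commute)
    ultimately show False using fixers_bound[OF fin stab two_point] by (simp add: algebra_simps)
  qed
qed

end

definition automorphisms :: "'a set \<Rightarrow> ('a \<times> 'a) set set \<Rightarrow> ('a \<Rightarrow> 'a) set" where
  "automorphisms \<Omega> S = {g. bij_betw g \<Omega> \<Omega> \<and> (\<forall>x. x \<notin> \<Omega> \<longrightarrow> g x = x) \<and>
     (\<forall>s\<in>S. \<forall>x\<in>\<Omega>. \<forall>y\<in>\<Omega>. (x, y) \<in> s \<longleftrightarrow> (g x, g y) \<in> s)}"

lemma automorphism_inv: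
  assumes g: "g \<in> automorphisms \<Omega> S"
  shows "inv g \<in> automorphisms \<Omega> S"
proof -
  have on: "bij_betw g \<Omega> \<Omega>" and off: "\<And>x. x \<notin> \<Omega> \<Longrightarrow> g x = x"
    and rel: "\<And>s x y. s \<in> S \<Longrightarrow> x \<in> \<Omega> \<Longrightarrow> y \<in> \<Omega> \<Longrightarrow> (x, y) \<in> s \<longleftrightarrow> (g x, g y) \<in> s"
    using g unfolding automorphisms_def by blast+
  have bij: "bij g" by (rule bij_if_fixes_outside[OF on off])
  have g_inv: "g (inv g x) = x" and inv_g: "inv g (g x) = x" for x
    using bij by (simp_all add: bij_is_surj surj_f_inv_f bij_is_inj)
  have inv_in: "inv g x \<in> \<Omega>" if "x \<in> \<Omega>" for x
    using on that inv_g unfolding bij_betw_def by (metis imageE)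
  have "bij_betw (inv g) \<Omega> \<Omega>"
  proof (rule bij_betwI[where g = g])
    show "inv g \<in> \<Omega> \<rightarrow> \<Omega>" using inv_in by blast
    show "g \<in> \<Omega> \<rightarrow> \<Omega>" using on unfolding bij_betw_def by blast
  qed (simp_all add: g_inv inv_g)
  moreover have "inv g x = x" if "x \<notin> \<Omega>" for x using inv_g[of x] off[OF that] by simp
  moreover have "(x, y) \<in> s \<longleftrightarrow> (inv g x, inv g y) \<in> s" if "s \<in> S" "x \<in> \<Omega>" "y \<in> \<Omega>" for s x y
    using rel[OF that(1) inv_in[OF that(2)] inv_in[OF that(3)]] by (simp add: g_inv)
  ultimately show ?thesis unfolding automorphisms_def by (simp only: mem_Collect_eq) blast
qed

lemma automorphism_comp:
  assumes "g \<in> automorphisms \<Omega> S" "h \<in> automorphisms \<Omega> S"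
  shows "g \<circ> h \<in> automorphisms \<Omega> S"
proof -
  have g: "bij_betw g \<Omega> \<Omega>" "\<And>x. x \<notin> \<Omega> \<Longrightarrow> g x = x"
    "\<And>s x y. s \<in> S \<Longrightarrow> x \<in> \<Omega> \<Longrightarrow> y \<in> \<Omega> \<Longrightarrow> (x, y) \<in> s \<longleftrightarrow> (g x, g y) \<in> s"
    using assms(1) unfolding automorphisms_def by blast+
  have h: "bij_betw h \<Omega> \<Omega>" "\<And>x. x \<notin> \<Omega> \<Longrightarrow> h x = x"
    "\<And>s x y. s \<in> S \<Longrightarrow> x \<in> \<Omega> \<Longrightarrow> y \<in> \<Omega> \<Longrightarrow> (x, y) \<in> s \<longleftrightarrow> (h x, h y) \<in> s"
    using assms(2) unfolding automorphisms_def by blast+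
  have h_in: "h x \<in> \<Omega>" if "x \<in> \<Omega>" for x using h(1) that unfolding bij_betw_def by blast
  have "(x, y) \<in> s \<longleftrightarrow> ((g \<circ> h) x, (g \<circ> h) y) \<in> s" if "s \<in> S" "x \<in> \<Omega>" "y \<in> \<Omega>" for s x y
    unfolding comp_apply using h(3)[OF that] g(3)[OF that(1) h_in[OF that(2)] h_in[OF that(3)]]
    by (rule trans)
  moreover have "bij_betw (g \<circ> h) \<Omega> \<Omega>" using bij_betw_trans[OF h(1) g(1)] .
  moreover have "(g \<circ> h) x = x" if "x \<notin> \<Omega>" for x using g(2) h(2) that by simp
  ultimately show ?thesis unfolding automorphisms_def by blast
qed

lemma automorphisms_perm_group: "perm_group \<Omega> (automorphisms \<Omega> S)"
proof -
  have "id \<in> automorphisms \<Omega> S" unfolding automorphisms_def by simp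
  moreover have "bij_betw g \<Omega> \<Omega> \<and> (\<forall>x. x \<notin> \<Omega> \<longrightarrow> g x = x)" if "g \<in> automorphisms \<Omega> S" for g
    using that unfolding automorphisms_def by blast
  ultimately show ?thesis
    using automorphism_inv automorphism_comp unfolding perm_group_def by blast
qed

lemma automorphismI:
  assumes S: "coherent_config \<Omega> S"
    and into: "g ` \<Omega> \<subseteq> \<Omega>" and inj: "inj_on g \<Omega>" and off: "\<And>x. x \<notin> \<Omega> \<Longrightarrow> g x = x"
    and fwd: "\<And>s x y. s \<in> S \<Longrightarrow> (x, y) \<in> s \<Longrightarrow> (g x, g y) \<in> s"
  shows "g \<in> automorphisms \<Omega> S"
proof -
  interpret S: cc \<Omega> S by (rule cc.intro[OF S])
  have "bij_betw g \<Omega> \<Omega>"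
    unfolding bij_betw_def using inj endo_inj_surj[OF S.finite_points into inj] by blast
  moreover have "(x, y) \<in> s \<longleftrightarrow> (g x, g y) \<in> s" if s: "s \<in> S" and xy: "x \<in> \<Omega>" "y \<in> \<Omega>" for s x y
  proof
    show "(x, y) \<in> s \<Longrightarrow> (g x, g y) \<in> s" by (rule fwd[OF s])
    assume "(g x, g y) \<in> s"
    have c: "S.cls (x, y) \<in> S" "(x, y) \<in> S.cls (x, y)" using S.cls[of "(x, y)"] xy by auto
    have "S.cls (x, y) = s"
      using S.basis_disjoint[OF c(1) s fwd[OF c] \<open>(g x, g y) \<in> s\<close>] .
    then show "(x, y) \<in> s" using c(2) by simp
  qed
  ultimately show ?thesis unfolding automorphisms_def using off by blast
qed

locale extension_hypothesis =
  fixes \<Omega> :: "'a set" and S :: "('a \<times> 'a) set set"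
  assumes scheme: "scheme \<Omega> S"
    and hyp: "\<forall>a\<in>\<Omega>. \<forall>T. is_alpha_extension \<Omega> S a T \<longrightarrow>
           semiregular_on T (\<Omega> - {a}) \<and> fibers T = {nbhd a s | s. s \<in> S}"
begin

sublocale S: cc \<Omega> S
  using scheme unfolding scheme_def by (intro cc.intro) blast

abbreviation Aut :: "('a \<Rightarrow> 'a) set" where
  "Aut \<equiv> automorphisms \<Omega> S"

sublocale Aut: permutation_group \<Omega> Aut
  by (rule permutation_group.intro[OF automorphisms_perm_group])

lemma diagonal_basis: "Id_on \<Omega> \<in> S"
  using scheme unfolding scheme_def by blast

lemma basis_at_diagonal: "u \<in> S \<Longrightarrow> (x, x) \<in> u \<Longrightarrow> x \<in> \<Omega> \<Longrightarrow> u = Id_on \<Omega>"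
  using S.basis_disjoint[OF diagonal_basis, of u "(x, x)"] by blast

lemma automorphism_preserves: "g \<in> Aut \<Longrightarrow> s \<in> S \<Longrightarrow> (x, y) \<in> s \<Longrightarrow> (g x, g y) \<in> s"
  using S.basis_sub unfolding automorphisms_def by blast

lemma valency_constant:
  assumes "s \<in> S" "d \<in> \<Omega>" "d' \<in> \<Omega>"
  shows "card (nbhd d s) = card (nbhd d' s)"
  using S.intersection_number[OF assms(1) S.converse_basis[OF assms(1)] diagonal_basis, of d d d' d']
    assms(2,3) unfolding nbhd_def by (simp add: Id_on_iff)

end

locale alpha_extension = extension_hypothesis +
  fixes a :: 'a and T :: "('a \<times> 'a) set set"
  assumes a: "a \<in> \<Omega>" and extension: "is_alpha_extension \<Omega> S a T"
begin

lemma admissible: "extension_admissible \<Omega> S a T"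
  using extension unfolding is_alpha_extension_def by blast

sublocale T: cc \<Omega> T
  using admissible unfolding extension_admissible_def by (intro cc.intro) blast

lemma semiregular: "semiregular_on T (\<Omega> - {a})"
  using hyp a extension by blast

lemma fibers_T: "fibers T = {nbhd a s | s. s \<in> S}"
  using hyp a extension by blast

lemma refines_S: "s \<in> S \<Longrightarrow> union_of T s"
  using admissible unfolding extension_admissible_def by blast

lemma fiber_eq_nbhd:
  assumes x: "x \<in> \<Omega>" and u: "u \<in> S" and ax: "(a, x) \<in> u"
  shows "(y, y) \<in> T.cls (x, x) \<longleftrightarrow> (a, y) \<in> u"
proof -
  let ?D = "{z. (z, z) \<in> T.cls (x, x)}"
  have "T.cls (x, x) = Id_on ?D" using T.diagonal_cls[OF x] by (auto simp: Id_on_def)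
  then have "?D \<in> fibers T" using T.cls x unfolding fibers_def by auto
  then obtain u' where u': "u' \<in> S" "?D = nbhd a u'" using fibers_T by blast
  have "(x, x) \<in> T.cls (x, x)" using T.cls x by blast
  then have "(a, x) \<in> u'" using u' unfolding nbhd_def by blast
  then have "u' = u" using S.basis_disjoint[OF u'(1) u _ ax] by blast
  then show ?thesis using u' unfolding nbhd_def by blast
qed

text \<open>The fibre of a point \<open>x \<noteq> a\<close> does not contain \<open>a\<close>, because \<open>{a}\<close> is the fibre of \<open>a\<close>.\<close>
lemma fiber_avoids_a:
  assumes x: "x \<in> \<Omega>" "x \<noteq> a" and y: "(y, y) \<in> T.cls (x, x)"
  shows "y \<noteq> a"
proof
  assume "y = a"
  let ?u = "S.cls (a, x)"
  have u: "?u \<in> S" "(a, x) \<in> ?u" using S.cls a x by auto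
  then have "(a, a) \<in> ?u" using fiber_eq_nbhd[OF x(1) u] y \<open>y = a\<close> by blast
  then have "?u = Id_on \<Omega>" using basis_at_diagonal u a by blast
  then show False using u x by (auto simp: Id_on_def)
qed

lemma class_off_a:
  assumes t: "t \<in> T" and xy: "(x, y) \<in> t" "x \<noteq> a" "y \<noteq> a" and p: "(x', y') \<in> t"
  shows "x' \<in> \<Omega> - {a}" "y' \<in> \<Omega> - {a}"
proof -
  have "x \<in> \<Omega>" "y \<in> \<Omega>" "x' \<in> \<Omega>" "y' \<in> \<Omega>" using T.basis_sub[OF t] xy p by auto
  then show "x' \<in> \<Omega> - {a}" "y' \<in> \<Omega> - {a}"
    using fiber_avoids_a T.start_fiber[OF t xy(1) p] T.end_fiber[OF t xy(1) p] xy by blast+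
qed

text \<open>Semiregularity: such a basis relation is the graph of a partial function.\<close>
lemma class_functional:
  assumes t: "t \<in> T" and xy: "(x, y) \<in> t" "x \<noteq> a" "y \<noteq> a" and bz: "(b, z) \<in> t" "(b, z') \<in> t"
  shows "z = z'"
proof -
  have "t \<subseteq> (\<Omega> - {a}) \<times> (\<Omega> - {a})" using class_off_a[OF t xy] by auto
  moreover have "b \<in> \<Omega> - {a}" using class_off_a[OF t xy bz(1)] by blast
  ultimately have "card (nbhd b t) \<le> 1" using semiregular t unfolding semiregular_on_def by blast
  moreover have "z \<in> nbhd b t" "z' \<in> nbhd b t" using bz unfolding nbhd_def by auto
  ultimately show ?thesis using T.finite_nbhd[OF t] by (auto simp: card_le_Suc0_iff_eq)
qed

lemma class_total:
  assumes t: "t \<in> T" and xy: "(x, y) \<in> t" and x': "(x', x') \<in> T.cls (x, x)"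
  obtains z where "(x', z) \<in> t"
proof -
  have "card (nbhd x t) > 0"
    using T.finite_nbhd[OF t] xy unfolding nbhd_def by (auto simp: card_gt_0_iff)
  then have "nbhd x' t \<noteq> {}" using T.valency_on_fiber[OF t xy x'] by auto
  then show ?thesis using that unfolding nbhd_def by blast
qed

text \<open>It will be an automorphism moving \<open>b\<close> to \<open>b'\<close>.\<close>
definition shift :: "'a \<Rightarrow> 'a \<Rightarrow> 'a \<Rightarrow> 'a" where
  "shift b b' x = (if x \<notin> \<Omega> \<or> x = a then x else THE z. (b', z) \<in> T.cls (b, x))"

lemma shift_mem:
  assumes b: "b \<in> \<Omega>" "b \<noteq> a" and b': "(b', b') \<in> T.cls (b, b)" and x: "x \<in> \<Omega>" "x \<noteq> a"
  shows "(b', shift b b' x) \<in> T.cls (b, x)" "shift b b' x \<in> \<Omega> - {a}"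
proof -
  let ?t = "T.cls (b, x)"
  have t: "?t \<in> T" "(b, x) \<in> ?t" using T.cls b x by auto
  obtain z where z: "(b', z) \<in> ?t" using class_total[OF t b'] .
  have "z' = z" if "(b', z') \<in> ?t" for z'
    using class_functional[OF t b(2) x(2) z that] by simp
  with z have "(THE z. (b', z) \<in> ?t) = z" by (rule the_equality)
  then have "shift b b' x = z" unfolding shift_def using x by simp
  then show "(b', shift b b' x) \<in> ?t" "shift b b' x \<in> \<Omega> - {a}"
    using z class_off_a[OF t b(2) x(2) z] by simp_all
qed

text \<open>The shift maps every pair off \<open>a\<close> into its own basis relation of \<open>T\<close>: counting the
  points \<open>c\<close> with \<open>(b, c) \<in> T.cls (b, x)\<close> and \<open>(c, y) \<in> T.cls (x, y)\<close> shows that the image of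
  \<open>x\<close> has the corresponding property with respect to \<open>b'\<close> and the image of \<open>y\<close>.\<close>
lemma shift_class:
  assumes b: "b \<in> \<Omega>" "b \<noteq> a" and b': "(b', b') \<in> T.cls (b, b)"
    and x: "x \<in> \<Omega>" "x \<noteq> a" and y: "y \<in> \<Omega>" "y \<noteq> a"
  shows "(shift b b' x, shift b b' y) \<in> T.cls (x, y)"
proof -
  let ?t1 = "T.cls (b, x)" and ?t2 = "T.cls (b, y)" and ?w = "T.cls (x, y)"
  have t1: "?t1 \<in> T" "(b, x) \<in> ?t1" and t2: "?t2 \<in> T" "(b, y) \<in> ?t2" and w: "?w \<in> T" "(x, y) \<in> ?w"
    using T.cls b x y by auto
  have "x \<in> {c. (b, c) \<in> ?t1 \<and> (c, y) \<in> ?w}" using t1 w by simp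
  then have "card {c. (b, c) \<in> ?t1 \<and> (c, y) \<in> ?w} > 0"
    by (intro card_gt_0_iff[THEN iffD2] conjI T.finite_row[OF t1(1)]) blast
  then have "card {c. (b', c) \<in> ?t1 \<and> (c, shift b b' y) \<in> ?w} > 0"
    using T.intersection_number[OF t1(1) w(1) t2(1) t2(2) shift_mem(1)[OF b b' y]] by simp
  then have "{c. (b', c) \<in> ?t1 \<and> (c, shift b b' y) \<in> ?w} \<noteq> {}"
    by (metis card_gt_0_iff)
  then obtain c where c: "(b', c) \<in> ?t1" "(c, shift b b' y) \<in> ?w" by blast
  have "c = shift b b' x" using class_functional[OF t1 b(2) x(2) c(1) shift_mem(1)[OF b b' x]] .
  then show ?thesis using c(2) by simp
qed

lemma shift_fixes: "shift b b' a = a" "x \<notin> \<Omega> \<Longrightarrow> shift b b' x = x"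
  unfolding shift_def by simp_all

lemma shift_inj:
  assumes b: "b \<in> \<Omega>" "b \<noteq> a" and b': "(b', b') \<in> T.cls (b, b)"
  shows "inj_on (shift b b') \<Omega>"
proof (rule inj_onI)
  let ?g = "shift b b'"
  fix x y assume x: "x \<in> \<Omega>" and y: "y \<in> \<Omega>" and eq: "?g x = ?g y"
  have g_off: "?g z \<in> \<Omega> - {a}" if "z \<in> \<Omega>" "z \<noteq> a" for z using shift_mem[OF b b' that] by blast
  show "x = y"
  proof (cases "x = a \<or> y = a")
    case True
    then show ?thesis
    proof
      assume "x = a" then show ?thesis using eq shift_fixes(1) g_off[OF y] by (cases "y = a") auto
    next
      assume "y = a" then show ?thesis using eq shift_fixes(1) g_off[OF x] by (cases "x = a") auto
    qed
  next
    case False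
    text \<open>The basis relation of \<open>(x, y)\<close> contains the diagonal pair \<open>(?g x, ?g y)\<close>.\<close>
    have c: "T.cls (x, y) \<in> T" "(x, y) \<in> T.cls (x, y)" using T.cls x y by auto
    have "(?g x, ?g y) \<in> T.cls (x, y)" using shift_class[OF b b' x _ y] False by blast
    moreover have "(?g x, ?g y) \<in> Id_on \<Omega>" using eq g_off[OF x] False by auto
    ultimately have "T.cls (x, y) \<subseteq> Id_on \<Omega>"
      by (rule T.union_of_contains[OF T.diagonal_union c(1)])
    then show ?thesis using c(2) by (auto simp: Id_on_def)
  qed
qed

lemma shift_within_nbhd:
  assumes b: "b \<in> \<Omega>" "b \<noteq> a" and b': "(b', b') \<in> T.cls (b, b)"
    and u: "u \<in> S" and ay: "(a, y) \<in> u"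
  shows "(a, shift b b' y) \<in> u"
proof (cases "y = a")
  case True then show ?thesis using shift_fixes(1) ay by simp
next
  case False
  have y: "y \<in> \<Omega>" using S.basis_sub[OF u] ay by blast
  have t: "T.cls (b, y) \<in> T" "(b, y) \<in> T.cls (b, y)" using T.cls b y by auto
  have "(shift b b' y, shift b b' y) \<in> T.cls (y, y)"
    by (rule T.end_fiber[OF t shift_mem(1)[OF b b' y False]])
  then show ?thesis using fiber_eq_nbhd[OF y u ay] by blast
qed

text \<open>The shift maps every basis relation of \<open>S\<close> into itself: pairs through \<open>a\<close> by
  \<open>shift_within_nbhd\<close>, pairs off \<open>a\<close> by \<open>shift_class\<close>, since \<open>T\<close> refines \<open>S\<close>.\<close>
lemma shift_preserves:
  assumes b: "b \<in> \<Omega>" "b \<noteq> a" and b': "(b', b') \<in> T.cls (b, b)"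
    and s: "s \<in> S" and xy: "(x, y) \<in> s"
  shows "(shift b b' x, shift b b' y) \<in> s"
proof -
  have x: "x \<in> \<Omega>" and y: "y \<in> \<Omega>" using S.basis_sub[OF s] xy by auto
  consider "x = a" | "y = a" | "x \<noteq> a" "y \<noteq> a" by blast
  then show ?thesis
  proof cases
    case 1 then show ?thesis using shift_within_nbhd[OF b b' s] xy shift_fixes(1) by simp
  next
    case 2
    then have "(a, shift b b' x) \<in> s\<inverse>"
      using shift_within_nbhd[OF b b' S.converse_basis[OF s]] xy by simp
    then show ?thesis using 2 shift_fixes(1) by simp
  next
    case 3
    have c: "T.cls (x, y) \<in> T" "(x, y) \<in> T.cls (x, y)" using T.cls x y by auto
    have "T.cls (x, y) \<subseteq> s" by (rule T.union_of_contains[OF refines_S[OF s] c xy])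
    then show ?thesis using shift_class[OF b b' x 3(1) y 3(2)] by blast
  qed
qed

lemma shift_automorphism:
  assumes b: "b \<in> \<Omega>" "b \<noteq> a" and b': "(b', b') \<in> T.cls (b, b)"
  shows "shift b b' \<in> Aut"
proof (rule automorphismI[OF S.coherent _ shift_inj[OF b b'] shift_fixes(2) shift_preserves[OF b b']])
  show "shift b b' ` \<Omega> \<subseteq> \<Omega>"
  proof (rule image_subsetI)
    fix x assume "x \<in> \<Omega>"
    then show "shift b b' x \<in> \<Omega>" using shift_fixes(1) shift_mem(2)[OF b b'] a by (cases "x = a") auto
  qed
qed

lemma shift_moves:
  assumes b: "b \<in> \<Omega>" "b \<noteq> a" and b': "(b', b') \<in> T.cls (b, b)"
  shows "shift b b' b = b'"
proof -
  have t: "T.cls (b, b) \<in> T" "(b, b) \<in> T.cls (b, b)" using T.cls b by auto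
  show ?thesis
    using class_functional[OF t b(2) b(2) b' shift_mem(1)[OF b b' b]] by simp
qed


lemma stabilizer_transitive:
  assumes s: "s \<in> S" and b: "(a, b) \<in> s" and b': "(a, b') \<in> s"
  obtains g where "g \<in> stabilizer Aut a" "g b = b'"
proof (cases "s = Id_on \<Omega>")
  case True
  then show ?thesis using that[of id] b b' Aut.id_mem unfolding stabilizer_def by auto
next
  case False
  have bO: "b \<in> \<Omega>" using S.basis_sub[OF s] b by blast
  have ba: "b \<noteq> a" using basis_at_diagonal[OF s] b a False by blast
  have "(b', b') \<in> T.cls (b, b)" using fiber_eq_nbhd[OF bO s b] b' by blast
  then show ?thesis
    using that shift_automorphism[OF bO ba] shift_fixes(1) shift_moves[OF bO ba]
    unfolding stabilizer_def by blast
qed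

text \<open>The stabilizer of \<open>a\<close> preserves every basis relation of the \<open>\<alpha>\<close>-extension: its orbital
  configuration is admissible, so \<open>T\<close>, being the coarsest admissible one, consists of unions
  of its orbitals.\<close>
lemma stabilizer_preserves_T:
  assumes g: "g \<in> stabilizer Aut a" and t: "t \<in> T" and xy: "(x, y) \<in> t"
  shows "(g x, g y) \<in> t"
proof -
  let ?H = "stabilizer Aut a"
  interpret H: permutation_group \<Omega> ?H
    by (rule permutation_group.intro[OF Aut.stabilizer_perm_group])
  have "extension_admissible \<Omega> S a (orbitals \<Omega> ?H)"
    unfolding extension_admissible_def
  proof (intro conjI ballI)
    show "coherent_config \<Omega> (orbitals \<Omega> ?H)" by (rule H.orbitals_coherent[OF S.finite_points])
    show "union_of (orbitals \<Omega> ?H) {(a, a)}"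
      by (rule H.union_of_orbitals) (use a in \<open>auto simp: stabilizer_def\<close>)
    show "union_of (orbitals \<Omega> ?H) s" if s: "s \<in> S" for s
      by (rule H.union_of_orbitals[OF S.basis_sub[OF s]])
        (use automorphism_preserves[OF _ s] in \<open>auto simp: stabilizer_def\<close>)
  qed
  then have "union_of (orbitals \<Omega> ?H) t" using extension t unfolding is_alpha_extension_def by blast
  then show ?thesis by (rule H.invariant_if_union_of_orbitals[OF _ g xy])
qed

text \<open>An automorphism fixing \<open>a\<close> and another point \<open>b\<close> fixes everything: it preserves the basis
  relation of \<open>(b, y)\<close>, which is functional.\<close>
lemma two_point_stabilizer_trivial:
  assumes g: "g \<in> stabilizer Aut a" and b: "b \<in> \<Omega>" "b \<noteq> a" and gb: "g b = b"
  shows "g = id"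
proof
  fix y
  show "g y = id y"
  proof (cases "y \<in> \<Omega> - {a}")
    case True
    let ?t = "T.cls (b, y)"
    have t: "?t \<in> T" "(b, y) \<in> ?t" using T.cls b True by auto
    have "(b, g y) \<in> ?t" using stabilizer_preserves_T[OF g t] gb by simp
    then have "y = g y" using class_functional[OF t b(2) _ t(2)] True by blast
    then show ?thesis by simp
  next
    case False
    then show ?thesis using g Aut.fixes_outside unfolding stabilizer_def by auto
  qed
qed

end

context extension_hypothesis
begin

lemma alpha_extension_at:
  assumes a: "a \<in> \<Omega>"
  obtains T where "alpha_extension \<Omega> S a T"
proof -
  obtain T where "is_alpha_extension \<Omega> S a T" using alpha_extension_exists[OF S.coherent a] by blast
  then have "alpha_extension \<Omega> S a T"
    by (intro alpha_extension.intro alpha_extension_axioms.intro extension_hypothesis_axioms a)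
  then show ?thesis by (rule that)
qed

lemma stabilizer_transitive:
  assumes a: "a \<in> \<Omega>" and s: "s \<in> S" and b: "(a, b) \<in> s" and b': "(a, b') \<in> s"
  obtains g where "g \<in> stabilizer Aut a" "g b = b'"
proof -
  obtain T where "alpha_extension \<Omega> S a T" using alpha_extension_at[OF a] .
  then interpret E: alpha_extension \<Omega> S a T .
  show ?thesis using E.stabilizer_transitive[OF s b b'] that by blast
qed

lemma two_point_stabilizer_trivial:
  assumes g: "g \<in> Aut" and ab: "a \<in> \<Omega>" "b \<in> \<Omega>" "a \<noteq> b" and fixed: "g a = a" "g b = b"
  shows "g = id"
proof -
  obtain T where "alpha_extension \<Omega> S a T" using alpha_extension_at[OF ab(1)] .
  then interpret E: alpha_extension \<Omega> S a T .
  show ?thesis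
    using E.two_point_stabilizer_trivial[OF _ ab(2)] g ab(3) fixed unfolding stabilizer_def by auto
qed

text \<open>The order of a point stabilizer equals the valency of any non-diagonal basis relation at that
  point: the stabilizer acts regularly on the neighbourhood.\<close>
lemma stabilizer_card:
  assumes s: "s \<in> S" and db: "(d, b) \<in> s" "b \<noteq> d"
  shows "card (stabilizer Aut d) = card (nbhd d s)"
proof -
  have d: "d \<in> \<Omega>" and bO: "b \<in> \<Omega>" using S.basis_sub[OF s] db(1) by auto
  have "bij_betw (\<lambda>g. g b) (stabilizer Aut d) (nbhd d s)"
    unfolding bij_betw_def
  proof
    show "inj_on (\<lambda>g. g b) (stabilizer Aut d)"
    proof (rule inj_onI)
      fix g h assume g: "g \<in> stabilizer Aut d" and h: "h \<in> stabilizer Aut d" and gh: "g b = h b"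
      have G: "g \<in> Aut" "h \<in> Aut" "g d = d" "h d = d" using g h unfolding stabilizer_def by auto
      let ?f = "inv h \<circ> g"
      have "?f = id"
        using two_point_stabilizer_trivial[OF Aut.comp_mem[OF Aut.inv_mem[OF G(2)] G(1)] d bO db(2)[symmetric]]
          Aut.inv_apply[OF G(2)] G(3,4) gh by (metis comp_apply)
      then have "h \<circ> ?f = h" by simp
      moreover have "h \<circ> ?f = g" using Aut.apply_inv[OF G(2)] by (simp add: fun_eq_iff)
      ultimately show "g = h" by simp
    qed
    show "(\<lambda>g. g b) ` stabilizer Aut d = nbhd d s"
    proof
      show "(\<lambda>g. g b) ` stabilizer Aut d \<subseteq> nbhd d s"
        using automorphism_preserves[OF _ s db(1)] unfolding stabilizer_def nbhd_def by force
      show "nbhd d s \<subseteq> (\<lambda>g. g b) ` stabilizer Aut d"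
      proof
        fix y assume "y \<in> nbhd d s"
        then obtain g where "g \<in> stabilizer Aut d" "g b = y"
          using stabilizer_transitive[OF d s db(1)] unfolding nbhd_def by blast
        then show "y \<in> (\<lambda>g. g b) ` stabilizer Aut d" by blast
      qed
    qed
  qed
  then show ?thesis by (rule bij_betw_same_card)
qed

text \<open>If some basis relation has valency at least two, the automorphism group is a Frobenius group:
  all point stabilizers have that valency as their order, so it is transitive by counting.\<close>
lemma frobenius_group_automorphisms:
  assumes a0: "a0 \<in> \<Omega>" and s0: "s0 \<in> S" and k: "2 \<le> card (nbhd a0 s0)"
  shows "frobenius_group \<Omega> Aut"
proof -
  have "s0 \<noteq> Id_on \<Omega>" using k a0 unfolding nbhd_def by (auto simp: Id_on_def)
  have stab: "card (stabilizer Aut d) = card (nbhd a0 s0)" if d: "d \<in> \<Omega>" for d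
  proof -
    have "card (nbhd d s0) = card (nbhd a0 s0)" by (rule valency_constant[OF s0 d a0])
    then have "nbhd d s0 \<noteq> {}" using k by auto
    then obtain b where db: "(d, b) \<in> s0" unfolding nbhd_def by blast
    then have "b \<noteq> d" using basis_at_diagonal[OF s0 _ d] \<open>s0 \<noteq> Id_on \<Omega>\<close> by blast
    then show ?thesis using stabilizer_card[OF s0 db] valency_constant[OF s0 d a0] by simp
  qed
  have transitive: "transitive_on \<Omega> Aut"
    by (rule Aut.transitive_by_counting[OF S.finite_points k stab two_point_stabilizer_trivial])
  have "\<not> stabilizer Aut a0 \<subseteq> {id}"
  proof
    assume "stabilizer Aut a0 \<subseteq> {id}"
    from card_mono[OF _ this] have "card (stabilizer Aut a0) \<le> card {id}" by simp
    then show False using stab[OF a0] k by simp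
  qed
  then obtain g where g: "g \<in> Aut" "g \<noteq> id" "g a0 = a0" unfolding stabilizer_def by blast
  show ?thesis
    unfolding frobenius_group_def
  proof (intro conjI)
    show "\<exists>g\<in>Aut. g \<noteq> id \<and> (\<exists>a\<in>\<Omega>. g a = a)" using g a0 by blast
    show "\<forall>g\<in>Aut. \<forall>a\<in>\<Omega>. \<forall>b\<in>\<Omega>. a \<noteq> b \<and> g a = a \<and> g b = b \<longrightarrow> g = id"
      using two_point_stabilizer_trivial by blast
  qed (fact Aut.perm_group transitive)+
qed

text \<open>For a transitive automorphism group, the orbital of \<open>(a, b)\<close> is the basis relation of \<open>(a, b)\<close>,
  since the stabilizer of each point is transitive on its neighbourhoods.\<close>
lemma orbital_automorphisms:
  assumes transitive: "transitive_on \<Omega> Aut" and ab: "a \<in> \<Omega>" "b \<in> \<Omega>"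
  shows "orbital Aut a b = S.cls (a, b)"
proof
  have s: "S.cls (a, b) \<in> S" "(a, b) \<in> S.cls (a, b)" using S.cls ab by auto
  show "orbital Aut a b \<subseteq> S.cls (a, b)"
    unfolding orbital_def using automorphism_preserves[OF _ s] by blast
  show "S.cls (a, b) \<subseteq> orbital Aut a b"
  proof (rule subrelI)
    fix x y assume xy: "(x, y) \<in> S.cls (a, b)"
    have x: "x \<in> \<Omega>" using S.basis_sub[OF s(1)] xy by blast
    obtain g where g: "g \<in> Aut" "g a = x" using transitive ab(1) x unfolding transitive_on_def by blast
    have "(x, g b) \<in> S.cls (a, b)" using automorphism_preserves[OF g(1) s] g(2) by simp
    then obtain h where h: "h \<in> stabilizer Aut x" "h (g b) = y"
      using stabilizer_transitive[OF x s(1) _ xy] by blast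
    then have "h \<circ> g \<in> Aut" "(x, y) = ((h \<circ> g) a, (h \<circ> g) b)"
      using Aut.comp_mem g unfolding stabilizer_def by auto
    then show "(x, y) \<in> orbital Aut a b" unfolding orbital_def by blast
  qed
qed

lemma orbitals_automorphisms:
  assumes "transitive_on \<Omega> Aut"
  shows "orbitals \<Omega> Aut = S"
proof
  show "orbitals \<Omega> Aut \<subseteq> S"
  proof
    fix x assume "x \<in> orbitals \<Omega> Aut"
    then obtain a b where "a \<in> \<Omega>" "b \<in> \<Omega>" "x = orbital Aut a b" unfolding orbitals_eq by blast
    then show "x \<in> S" using orbital_automorphisms[OF assms] S.cls[of "(a, b)"] by simp
  qed
  show "S \<subseteq> orbitals \<Omega> Aut"
  proof
    fix s assume s: "s \<in> S"
    then obtain a b where ab: "(a, b) \<in> s" using S.basis_nonempty by fast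
    then have "a \<in> \<Omega>" "b \<in> \<Omega>" using S.basis_sub[OF s] by auto
    moreover have "s = orbital Aut a b"
      using orbital_automorphisms[OF assms calculation] S.cls_eq[OF s ab] by simp
    ultimately show "s \<in> orbitals \<Omega> Aut" unfolding orbitals_eq by blast
  qed
qed

end

theorem theorem6p1:
  fixes \<Omega> :: "'a set" and S :: "('a \<times> 'a) set set"
  assumes "scheme \<Omega> S"
    and "\<forall>a\<in>\<Omega>. \<forall>T. is_alpha_extension \<Omega> S a T \<longrightarrow>
           semiregular_on T (\<Omega> - {a}) \<and> fibers T = {nbhd a s | s. s \<in> S}"
  shows "regular_scheme \<Omega> S \<or> frobenius_scheme \<Omega> S"
proof (cases "\<forall>a\<in>\<Omega>. \<forall>s\<in>S. card (nbhd a s) \<le> 1")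
  case True
  then have "regular_scheme \<Omega> S"
    using assms(1) unfolding regular_scheme_def semiregular_def scheme_def by blast
  then show ?thesis ..
next
  case False
  then obtain a0 s0 where a0: "a0 \<in> \<Omega>" "s0 \<in> S" "2 \<le> card (nbhd a0 s0)"
    by (auto simp: not_le)
  interpret extension_hypothesis \<Omega> S by (rule extension_hypothesis.intro[OF assms])
  have "frobenius_group \<Omega> Aut" by (rule frobenius_group_automorphisms[OF a0])
  moreover have "orbitals \<Omega> Aut = S"
    using calculation orbitals_automorphisms unfolding frobenius_group_def by blast
  ultimately have "frobenius_scheme \<Omega> S" unfolding frobenius_scheme_def by blast
  then show ?thesis ..
qed

end
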